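(* Let $\mathbf{T}\subset\mathbb{S}^3$ be a $\mathbb{Z}_2$-symmetric spherical tetrahedron with dihedral angles $A$, $B=E$, $C=F$, $D$ and edge lengths $l_A$, $l_B=l_E$, $l_C=l_F$, $l_D$. Put $\mathcal{A}_+=\cos\frac{A+D}{2}$, $\mathcal{A}_-=\cos\frac{D-A}{2}$, $\mathcal{B}=\cos B$, $\mathcal{C}=\cos C$, and $$\Delta=(\mathcal{A}_--\mathcal{A}_+-\mathcal{B}-\mathcal{C})(\mathcal{A}_--\mathcal{A}_++\mathcal{B}+\mathcal{C})(\mathcal{A}_-+\mathcal{A}_+-\mathcal{B}+\mathcal{C})(\mathcal{A}_-+\mathcal{A}_++\mathcal{B}-\mathcal{C}).$$ Then the dual parameter $v=\sqrt{c_{00}c_{22}/\det G}$ of $\mathbf{T}$ is a positive root of the quadratic equation $$v^2-\frac{4\,(\mathcal{A}_+\mathcal{A}_-+\mathcal{B}\mathcal{C})(\mathcal{A}_+\mathcal{B}+\mathcal{A}_-\mathcal{C})(\mathcal{A}_+\mathcal{C}+\mathcal{A}_-\mathcal{B})}{\Delta}=1.$$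
   Context: A spherical tetrahedron $\mathbf{T}\subset\mathbb{S}^3\subset\mathbb{R}^4$ is the intersection of $\mathbb{S}^3$ with the cone over four linearly independent unit vectors $\mathrm{p}_0,\dots,\mathrm{p}_3$. Edge lengths $l_{ij}\in[0,\pi]$: $\cos l_{ij}=\langle\mathrm{p}_i,\mathrm{p}_j\rangle$; dihedral angles $\alpha_{ij}\in[0,\pi]$: $\cos\alpha_{ij}=-\langle\mathrm{v}_i,\mathrm{v}_j\rangle$ with $\mathrm{v}_i$ the outer unit normal of the face opposite $\mathrm{p}_i$. Notation: $l_A=l_{01}$, $l_B=l_{02}$, $l_C=l_{03}$, $l_D=l_{23}$, $l_E=l_{13}$, $l_F=l_{12}$; $A,\dots,F$ are the dihedral angles along the edges of lengths $l_A,\dots,l_F$. The Gram matrix is $G=(\langle\mathrm{v}_i,\mathrm{v}_j\rangle)_{i,j=0}^3=\begin{pmatrix}1&-\cos D&-\cos E&-\cos F\\ -\cos D&1&-\cos C&-\cos B\\ -\cos E&-\cos C&1&-\cos A\\ -\cos F&-\cos B&-\cos A&1\end{pmatrix}$, and $c_{ij}$ denotes its $(i,j)$-cofactor $(-1)^{i+j}\det(\text{minor})$. $\mathbf{T}$ is $\mathbb{Z}_2$-symmetric if invariant under rotation through $\pi$ about the axis through the midpoints of the edges $\mathrm{p}_0\mathrm{p}_1$ and $\mathrm{p}_2\mathrm{p}_3$ (so $l_B=l_E$, $l_C=l_F$, $B=E$, $C=F$). *)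

theory Defs
  imports "HOL-Analysis.Analysis" "Jordan_Normal_Form.Determinant"
begin

definition spherical_tetrahedron :: "(nat \<Rightarrow> real^4) \<Rightarrow> bool" where
  "spherical_tetrahedron p \<longleftrightarrow>
     (\<forall>i<4. norm (p i) = 1) \<and> inj_on p {..<4} \<and> independent (p ` {..<4})"

definition tetra_set :: "(nat \<Rightarrow> real^4) \<Rightarrow> (real^4) set" where
  "tetra_set p = {x. norm x = 1 \<and>
     (\<exists>t::nat \<Rightarrow> real. (\<forall>i<4. t i \<ge> 0) \<and> x = (\<Sum>i<4. t i *\<^sub>R p i))}"

definition outer_normal :: "(nat \<Rightarrow> real^4) \<Rightarrow> nat \<Rightarrow> real^4 \<Rightarrow> bool" where
  "outer_normal p i w \<longleftrightarrow>
     norm w = 1 \<and> (\<forall>j<4. j \<noteq> i \<longrightarrow> inner w (p j) = 0) \<and> inner w (p i) < 0"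

definition dihedral :: "(nat \<Rightarrow> real^4) \<Rightarrow> nat \<Rightarrow> nat \<Rightarrow> real" where
  "dihedral v i j = arccos (- inner (v i) (v j))"

definition gram :: "(nat \<Rightarrow> real^4) \<Rightarrow> real Matrix.mat" where
  "gram v = Matrix.mat 4 4 (\<lambda>(i, j). inner (v i) (v j))"

text \<open>Z2-symmetry: invariance under the rotation through pi about the great circle through
  the midpoints of the edges p0p1 and p2p3, i.e. the linear map fixing
  W = span {p0+p1, p2+p3} pointwise and acting as -1 on the orthogonal complement of W.\<close>
definition Z2_symmetric :: "(nat \<Rightarrow> real^4) \<Rightarrow> bool" where
  "Z2_symmetric p \<longleftrightarrow>
     (\<exists>R :: real^4 \<Rightarrow> real^4. linear R \<and>
        (\<forall>x\<in>span {p 0 + p 1, p 2 + p 3}. R x = x) \<and>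
        (\<forall>x. (\<forall>w\<in>span {p 0 + p 1, p 2 + p 3}. inner x w = 0) \<longrightarrow> R x = - x) \<and>
        R ` tetra_set p = tetra_set p)"

end

theory Submission
  imports Defs
begin

(*
  The half-turn R of a Z2-symmetric tetrahedron is an isometry that maps the cone over the vertices
  onto itself and fixes the directions p0 + p1 and p2 + p3. Writing R p0 = p1 + y with y in the
  axis plane and comparing cone coordinates of R p0 and R p1 forces y = 0, so R swaps p0 with p1
  and likewise p2 with p3; hence it swaps the face normals v0, v1 and v2, v3. The Gram matrix G
  therefore only depends on a, b, c, d = cos A, cos B, cos C, cos D, and expanding gives
    det G = ((1 - a)(1 - d) - (b + c)^2) ((1 + a)(1 + d) - (b - c)^2),
    c00 = 1 - a^2 - b^2 - c^2 - 2abc,   c22 = 1 - b^2 - c^2 - d^2 - 2bcd.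
  Since Ap Am = (a + d)/2 and Ap^2 + Am^2 = 1 + ad, det G is the product Delta and
  c00 c22 = Delta + 4N for the numerator N of the theorem, i.e. v^2 = 1 + 4N/Delta.
  Positivity holds because G, and the Gram matrices obtained by replacing v0 by p0 (resp. v2 by p2),
  whose determinants are c00 (resp. c22), belong to linearly independent families.
*)

lemma mat_delete_mat:
  "mat_delete (Matrix.mat m n f) i j =
     Matrix.mat (m - 1) (n - 1) (\<lambda>(i', j'). f (if i' < i then i' else Suc i', if j' < j then j' else Suc j'))"
  unfolding mat_delete_def by (rule eq_matI) auto

lemma det_mat_Suc:
  "det (Matrix.mat (Suc n) (Suc n) f) = (\<Sum>j<Suc n. f (0,j) * ((-1)^j *
     det (Matrix.mat n n (\<lambda>(i',j'). f (Suc i', if j' < j then j' else Suc j')))))"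
proof -
  have "det (Matrix.mat (Suc n) (Suc n) f) =
      (\<Sum>j<Suc n. Matrix.mat (Suc n) (Suc n) f $$ (0,j) * cofactor (Matrix.mat (Suc n) (Suc n) f) 0 j)"
    by (rule laplace_expansion_row) auto
  then show ?thesis by (simp add: cofactor_def mat_delete_mat)
qed

lemma det_mat_1: "det (Matrix.mat 1 1 f) = f (0,0)"
  by (subst det_single) auto

lemma det_mat_3:
  "det (Matrix.mat 3 3 f) =
     f (0,0)*f (1,1)*f (2,2) - f (0,0)*f (1,2)*f (2,1) - f (0,1)*f (1,0)*f (2,2)
   + f (0,1)*f (1,2)*f (2,0) + f (0,2)*f (1,0)*f (2,1) - f (0,2)*f (1,1)*f (2,0)"
  by (simp add: numeral_eq_Suc det_mat_Suc det_mat_1 lessThan_Suc del: One_nat_def)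
    (simp add: algebra_simps)

lemma det_mat_4:
  "det (Matrix.mat 4 4 f) =
     f (0,0)*f (1,1)*f (2,2)*f (3,3) - f (0,0)*f (1,1)*f (2,3)*f (3,2) - f (0,0)*f (1,2)*f (2,1)*f (3,3)
   + f (0,0)*f (1,2)*f (2,3)*f (3,1) + f (0,0)*f (1,3)*f (2,1)*f (3,2) - f (0,0)*f (1,3)*f (2,2)*f (3,1)
   - f (0,1)*f (1,0)*f (2,2)*f (3,3) + f (0,1)*f (1,0)*f (2,3)*f (3,2) + f (0,1)*f (1,2)*f (2,0)*f (3,3)
   - f (0,1)*f (1,2)*f (2,3)*f (3,0) - f (0,1)*f (1,3)*f (2,0)*f (3,2) + f (0,1)*f (1,3)*f (2,2)*f (3,0)
   + f (0,2)*f (1,0)*f (2,1)*f (3,3) - f (0,2)*f (1,0)*f (2,3)*f (3,1) - f (0,2)*f (1,1)*f (2,0)*f (3,3)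
   + f (0,2)*f (1,1)*f (2,3)*f (3,0) + f (0,2)*f (1,3)*f (2,0)*f (3,1) - f (0,2)*f (1,3)*f (2,1)*f (3,0)
   - f (0,3)*f (1,0)*f (2,1)*f (3,2) + f (0,3)*f (1,0)*f (2,2)*f (3,1) + f (0,3)*f (1,1)*f (2,0)*f (3,2)
   - f (0,3)*f (1,1)*f (2,2)*f (3,0) - f (0,3)*f (1,2)*f (2,0)*f (3,1) + f (0,3)*f (1,2)*f (2,1)*f (3,0)"
  by (simp add: numeral_eq_Suc det_mat_Suc det_mat_1 lessThan_Suc del: One_nat_def)
    (simp add: algebra_simps)

lemma lessThan_4: "{..<4::nat} = {0, 1, 2, 3}"
  by (auto simp: lessThan_nat_numeral)

lemma less_4_cases: "(i::nat) < 4 \<Longrightarrow> i = 0 \<or> i = 1 \<or> i = 2 \<or> i = 3"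
  by auto

lemma all_less_4: "(\<forall>i<(4::nat). P i) \<longleftrightarrow> P 0 \<and> P 1 \<and> P 2 \<and> P 3"
  using lessThan_4 by (auto simp: set_eq_iff)

section \<open>Gram determinants\<close>

lemma lincomb_coeff_eq_0_if_pairing_diagonal:
  fixes w q :: "nat \<Rightarrow> 'a::real_inner"
  assumes off_diag: "\<And>i j. i < n \<Longrightarrow> j < n \<Longrightarrow> i \<noteq> j \<Longrightarrow> i \<noteq> m \<Longrightarrow> w i \<bullet> q j = 0"
    and diag: "\<And>i. i < n \<Longrightarrow> w i \<bullet> q i \<noteq> 0"
    and comb: "(\<Sum>i<n. x i *\<^sub>R w i) = 0" and k: "k < n"
  shows "x k = 0"
proof -
  have paired: "(\<Sum>i<n. x i * (w i \<bullet> q j)) = 0" for j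
    using arg_cong[OF comb, of "\<lambda>y. y \<bullet> q j"] by (simp add: inner_sum_left)
  have single: "(\<Sum>i<n. x i * (w i \<bullet> q j)) = x j * (w j \<bullet> q j)"
    if "j < n" "\<And>i. i < n \<Longrightarrow> i \<noteq> j \<Longrightarrow> x i * (w i \<bullet> q j) = 0" for j
  proof -
    have "(\<Sum>i\<in>{..<n} - {j}. x i * (w i \<bullet> q j)) = 0"
      using that(2) by (intro sum.neutral) auto
    then show ?thesis using that(1) by (simp add: sum.remove[of "{..<n}" j])
  qed
  have xm: "x m = 0" if "m < n"
    using paired[of m] single[of m] off_diag diag[of m] that by auto
  have "(\<Sum>i<n. x i * (w i \<bullet> q k)) = x k * (w k \<bullet> q k)"
  proof (rule single[OF k])
    fix i assume "i < n" "i \<noteq> k"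
    then show "x i * (w i \<bullet> q k) = 0" using off_diag[of i k] xm k by (cases "i = m") auto
  qed
  then show ?thesis using paired[of k] diag[OF k] by simp
qed

lemma det_gram_pos:
  fixes w :: "nat \<Rightarrow> real^4"
  assumes indep: "\<And>x k. (\<Sum>i<4. x i *\<^sub>R w i) = 0 \<Longrightarrow> k < 4 \<Longrightarrow> x k = 0"
  shows "det (gram w) > 0"
proof -
  define e :: "nat \<Rightarrow> 4"
    where "e k = (if k = 0 then 1 else if k = 1 then 2 else if k = 2 then 3 else 4)" for k
  define V where "V = Matrix.mat 4 4 (\<lambda>(i,k). w i $ e k)"
  have V: "V \<in> carrier_mat 4 4" by (simp add: V_def)
  have entry: "(\<Sum>k<4. w i $ e k * w j $ e k) = w i \<bullet> w j" for i j
    by (simp add: lessThan_4 inner_vec_def sum_4 e_def)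
  have gram: "gram w = V * V\<^sup>T"
    by (rule eq_matI) (use V in \<open>auto simp: gram_def V_def scalar_prod_def atLeast0LessThan entry\<close>)
  have "det V \<noteq> 0"
  proof
    assume "det V = 0"
    then have "det (V\<^sup>T) = 0" using det_transpose[OF V] by simp
    then obtain x where x: "x \<in> carrier_vec 4" "x \<noteq> 0\<^sub>v 4" "V\<^sup>T *\<^sub>v x = 0\<^sub>v 4"
      using det_0_iff_vec_prod_zero[of "V\<^sup>T" 4] V by auto
    have coord: "(\<Sum>i<4. Matrix.vec_index x i * w i $ e k) = 0" if "k < 4" for k
    proof -
      have "Matrix.vec_index (V\<^sup>T *\<^sub>v x) k = 0" using x(3) that by simp
      then show ?thesis using that x(1) V by (simp add: V_def scalar_prod_def atLeast0LessThan mult.commute)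
    qed
    have "(\<Sum>i<4. Matrix.vec_index x i *\<^sub>R w i) = 0"
    proof -
      have "(\<Sum>i<4. Matrix.vec_index x i *\<^sub>R w i) $ e k = 0" if "k < 4" for k
        using coord[OF that] by simp
      from this[of 0] this[of 1] this[of 2] this[of 3] show ?thesis
        unfolding Finite_Cartesian_Product.vec_eq_iff forall_4 by (simp add: e_def)
    qed
    then have "x = 0\<^sub>v 4" using indep x(1) by (intro eq_vecI) auto
    with x(2) show False by simp
  qed
  moreover have "det (gram w) = det V * det V"
  proof -
    have "V\<^sup>T \<in> carrier_mat 4 4" using V by simp
    then show ?thesis unfolding gram using det_mult[OF V] det_transpose[OF V] by simp
  qed
  ultimately show ?thesis by (metis not_real_square_gt_zero)
qed

lemma det_gram_pos_if_pairing_diagonal: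
  fixes w q :: "nat \<Rightarrow> real^4"
  assumes "\<And>i j. i < 4 \<Longrightarrow> j < 4 \<Longrightarrow> i \<noteq> j \<Longrightarrow> i \<noteq> m \<Longrightarrow> w i \<bullet> q j = 0"
    and "\<And>i. i < 4 \<Longrightarrow> w i \<bullet> q i \<noteq> 0"
  shows "det (gram w) > 0"
proof (rule det_gram_pos)
  fix x :: "nat \<Rightarrow> real" and k :: nat
  assume "(\<Sum>i<4. x i *\<^sub>R w i) = 0" "k < 4"
  then show "x k = 0" using assms by (rule lincomb_coeff_eq_0_if_pairing_diagonal[rotated 2])
qed

text \<open>Replacing the vector of row i by a unit vector orthogonal to the others turns row and
  column i of the Gram matrix into a unit vector, leaving only the cofactor.\<close>

lemma cofactor_gram_eq_det_gram_update:
  fixes v :: "nat \<Rightarrow> real^4"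
  assumes i: "i < 4" and q: "norm q = 1" and orth: "\<And>j. j < 4 \<Longrightarrow> j \<noteq> i \<Longrightarrow> v j \<bullet> q = 0"
  shows "cofactor (gram v) i i = det (gram (v(i := q)))"
proof -
  let ?G = "gram (v(i := q))"
  have row: "?G $$ (i, j) = (if j = i then 1 else 0)" if "j < 4" for j
    using that i q orth[of j] by (simp add: gram_def inner_commute norm_eq_1)
  have "mat_delete ?G i i = mat_delete (gram v) i i"
    unfolding gram_def mat_delete_mat by (rule eq_matI) auto
  then have "cofactor (gram v) i i = cofactor ?G i i" by (simp add: cofactor_def)
  also have "\<dots> = (\<Sum>j<4. if j = i then cofactor ?G i j else 0)"
    using i by simp
  also have "\<dots> = (\<Sum>j<4. ?G $$ (i, j) * cofactor ?G i j)"
    by (rule sum.cong) (auto simp: row)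
  also have "\<dots> = det ?G"
    by (rule laplace_expansion_row[symmetric, OF _ i]) (simp add: gram_def)
  finally show ?thesis .
qed

lemma tetra_coeffs_unique:
  fixes p :: "nat \<Rightarrow> real^4"
  assumes tet: "spherical_tetrahedron p"
    and eq: "(\<Sum>j<4. a j *\<^sub>R p j) = (\<Sum>j<4. b j *\<^sub>R p j)" and k: "k < 4"
  shows "a k = b k"
proof (rule ccontr)
  assume ne: "a k \<noteq> b k"
  have inj: "inj_on p {..<4}" and ind: "independent (p ` {..<4})"
    using tet by (auto simp: spherical_tetrahedron_def)
  define u where "u x = a (inv_into {..<4} p x) - b (inv_into {..<4} p x)" for x
  have "(\<Sum>x\<in>p ` {..<4}. u x *\<^sub>R x) = (\<Sum>j<4. u (p j) *\<^sub>R p j)"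
    by (rule sum.reindex[OF inj, unfolded comp_def])
  also have "\<dots> = (\<Sum>j<4. a j *\<^sub>R p j) - (\<Sum>j<4. b j *\<^sub>R p j)"
    by (simp add: u_def inv_into_f_f[OF inj] scaleR_diff_left sum_subtractf)
  finally have "(\<Sum>x\<in>p ` {..<4}. u x *\<^sub>R x) = 0" using eq by simp
  moreover have "u (p k) \<noteq> 0" using ne k by (simp add: u_def inv_into_f_f[OF inj])
  ultimately have "dependent (p ` {..<4})"
    using k by (subst dependent_finite) auto
  with ind show False by simp
qed

lemma tetra_set_coeff_nonneg:
  fixes p :: "nat \<Rightarrow> real^4"
  assumes tet: "spherical_tetrahedron p"
    and mem: "(\<Sum>j<4. c j *\<^sub>R p j) \<in> tetra_set p" and k: "k < 4"
  shows "c k \<ge> 0"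
proof -
  obtain t where "\<forall>i<4. t i \<ge> 0" "(\<Sum>j<4. c j *\<^sub>R p j) = (\<Sum>j<4. t j *\<^sub>R p j)"
    using mem unfolding tetra_set_def by blast
  with tetra_coeffs_unique[OF tet _ k] k show ?thesis by metis
qed

lemma vertex_in_tetra_set:
  fixes p :: "nat \<Rightarrow> real^4"
  assumes tet: "spherical_tetrahedron p" and k: "k < 4"
  shows "p k \<in> tetra_set p"
  unfolding tetra_set_def
proof (intro CollectI conjI exI[of _ "\<lambda>i. if i = k then 1 else 0"])
  show "norm (p k) = 1" using tet k by (simp add: spherical_tetrahedron_def)
  show "\<forall>i<4. 0 \<le> (if i = k then 1 else (0::real))" by simp
  have "(\<Sum>i<4. (if i = k then 1 else 0) *\<^sub>R p i) = (\<Sum>i<4. if i = k then p i else 0)"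
    by (rule sum.cong) auto
  also have "\<dots> = p k" using k by simp
  finally show "p k = (\<Sum>i<4. (if i = k then 1 else 0) *\<^sub>R p i)" by simp
qed

lemma orthogonal_to_vertices_eq_0:
  fixes p :: "nat \<Rightarrow> real^4"
  assumes tet: "spherical_tetrahedron p" and orth: "\<And>j. j < 4 \<Longrightarrow> x \<bullet> p j = 0"
  shows "x = 0"
proof -
  have inj: "inj_on p {..<4}" and ind: "independent (p ` {..<4})"
    using tet by (auto simp: spherical_tetrahedron_def)
  have "card (p ` {..<4}) = dim (UNIV :: (real^4) set)" using card_image[OF inj] by simp
  then have "UNIV \<subseteq> span (p ` {..<4})"
    using card_eq_dim[of "p ` {..<4}" UNIV] ind by auto
  then have "x \<in> span (p ` {..<4})" by auto
  then have "Linear_Algebra.orthogonal x x"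
    by (rule orthogonal_to_span) (use orth in \<open>auto simp: Linear_Algebra.orthogonal_def\<close>)
  then show ?thesis by (simp add: orthogonal_self)
qed

lemma outer_normal_unique:
  fixes p :: "nat \<Rightarrow> real^4"
  assumes tet: "spherical_tetrahedron p" and i: "i < 4"
    and u: "outer_normal p i u" and w: "outer_normal p i w"
  shows "u = w"
proof -
  have "(w \<bullet> p i) *\<^sub>R u - (u \<bullet> p i) *\<^sub>R w = 0"
  proof (rule orthogonal_to_vertices_eq_0[OF tet])
    fix j :: nat assume "j < 4"
    then show "((w \<bullet> p i) *\<^sub>R u - (u \<bullet> p i) *\<^sub>R w) \<bullet> p j = 0"
      using u w by (cases "j = i") (auto simp: outer_normal_def inner_diff_left)
  qed
  then have e: "(w \<bullet> p i) *\<^sub>R u = (u \<bullet> p i) *\<^sub>R w" by simp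
  have "\<bar>w \<bullet> p i\<bar> = \<bar>u \<bullet> p i\<bar>"
    using arg_cong[OF e, of norm] u w by (simp add: outer_normal_def)
  moreover have "w \<bullet> p i < 0" "u \<bullet> p i < 0" using u w by (simp_all add: outer_normal_def)
  ultimately have "w \<bullet> p i = u \<bullet> p i" by simp
  with e show ?thesis using u by (simp add: outer_normal_def)
qed

lemma outer_normal_orthogonal_transformation:
  fixes p :: "nat \<Rightarrow> real^4"
  assumes R: "orthogonal_transformation R" and s: "s permutes {..<4}"
    and Rp: "\<And>j. j < 4 \<Longrightarrow> R (p j) = p (s j)"
    and i: "i < 4" and w: "outer_normal p i w"
  shows "outer_normal p (s i) (R w)"
proof -
  have pair: "R w \<bullet> p (s j) = w \<bullet> p j" if "j < 4" for j
    using R Rp[OF that] by (metis orthogonal_transformation_def)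
  have "R w \<bullet> p k = 0" if k: "k < 4" "k \<noteq> s i" for k
  proof -
    have "Hilbert_Choice.inv s k < 4" "s (Hilbert_Choice.inv s k) = k"
      using s k permutes_in_image[OF permutes_inv[OF s]] permutes_inverses[OF s] by auto
    then show ?thesis
      using pair[of "Hilbert_Choice.inv s k"] w k unfolding outer_normal_def by metis
  qed
  moreover have "R w \<bullet> p (s i) < 0" using pair[OF i] w by (simp add: outer_normal_def)
  ultimately show ?thesis
    using w R by (simp add: outer_normal_def orthogonal_transformation_norm)
qed

section \<open>The half-turn of a Z2-symmetric tetrahedron\<close>

definition reflection_through :: "'a::euclidean_space set \<Rightarrow> ('a \<Rightarrow> 'a) \<Rightarrow> bool" where
  "reflection_through S R \<longleftrightarrow> linear R \<and> (\<forall>x\<in>span S. R x = x) \<and>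
     (\<forall>x. (\<forall>w\<in>span S. x \<bullet> w = 0) \<longrightarrow> R x = - x)"

lemma reflection_through_decomp:
  assumes R: "reflection_through S R"
  obtains y z where "y \<in> span S" "\<forall>w\<in>span S. z \<bullet> w = 0" "x = y + z" "R x = y - z"
proof -
  obtain y z where y: "y \<in> span S" and z: "\<And>w. w \<in> span S \<Longrightarrow> Linear_Algebra.orthogonal z w"
    and x: "x = y + z"
    using orthogonal_subspace_decomp_exists[of S x] by blast
  have z': "\<forall>w\<in>span S. z \<bullet> w = 0" using z by (simp add: Linear_Algebra.orthogonal_def)
  have "R x = y - z"
    using R y z' unfolding x reflection_through_def by (simp add: linear_add)
  with y z' x that show ?thesis by blast
qed

lemma reflection_through_orthogonal_transformation:
  assumes R: "reflection_through S R"
  shows "orthogonal_transformation R"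
  unfolding orthogonal_transformation_def
proof (intro conjI allI)
  show "linear R" using R by (simp add: reflection_through_def)
  fix x x'
  obtain y z where y: "y \<in> span S" and z: "\<forall>w\<in>span S. z \<bullet> w = 0"
    and x: "x = y + z" and Rx: "R x = y - z"
    using reflection_through_decomp[OF R] by metis
  obtain y' z' where y': "y' \<in> span S" and z': "\<forall>w\<in>span S. z' \<bullet> w = 0"
    and x': "x' = y' + z'" and Rx': "R x' = y' - z'"
    using reflection_through_decomp[OF R] by metis
  have "z \<bullet> y' = 0" "z' \<bullet> y = 0" using z z' y y' by auto
  then have "(y - z) \<bullet> (y' - z') = (y + z) \<bullet> (y' + z')"
    by (simp add: inner_diff_left inner_diff_right inner_add_left inner_add_right inner_commute)
  then show "R x \<bullet> R x' = x \<bullet> x'" unfolding Rx Rx' by (simp add: x x')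
qed

lemma reflection_through_swap:
  assumes R: "reflection_through S R" and ab: "a + b \<in> span S"
  obtains y where "y \<in> span S" "R a = b + y" "R b = a - y"
proof -
  obtain y z where y: "y \<in> span S" and x: "a - b = y + z" and Rx: "R (a - b) = y - z"
    using reflection_through_decomp[OF R] by metis
  have lin: "linear R" and sum: "R (a + b) = a + b"
    using R ab by (auto simp: reflection_through_def)
  have "2 *\<^sub>R R a = R (a + b) + R (a - b)"
    using lin by (simp add: linear_add linear_diff scaleR_2)
  also have "\<dots> = 2 *\<^sub>R (b + y)"
    unfolding sum Rx using x by (simp add: algebra_simps scaleR_2 eq_diff_eq)
  finally have Ra: "R a = b + y" by simp
  have "R b = R (a + b) - R a" using lin by (simp add: linear_add)
  then have "R b = a - y" unfolding sum Ra by simp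
  with y Ra that show ?thesis by blast
qed

lemma half_turn_swaps_first_edge:
  fixes p :: "nat \<Rightarrow> real^4"
  assumes tet: "spherical_tetrahedron p"
    and R: "reflection_through {p 0 + p 1, p 2 + p 3} R" and img: "R ` tetra_set p = tetra_set p"
  shows "R (p 0) = p 1 \<and> R (p 1) = p 0"
proof -
  obtain y where y: "y \<in> span {p 0 + p 1, p 2 + p 3}" and R0: "R (p 0) = p 1 + y"
    and R1: "R (p 1) = p 0 - y"
    using reflection_through_swap[OF R] span_base[of "p 0 + p 1"] by (metis insertI1)
  obtain a where "y - a *\<^sub>R (p 0 + p 1) \<in> span {p 2 + p 3}"
    using y by (auto simp: span_breakdown_eq)
  then obtain b where "y - a *\<^sub>R (p 0 + p 1) = b *\<^sub>R (p 2 + p 3)"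
    by (auto simp: span_singleton)
  then have ab: "y = a *\<^sub>R (p 0 + p 1) + b *\<^sub>R (p 2 + p 3)"
    by (simp add: algebra_simps)
  have in_tetra: "R (p k) \<in> tetra_set p" if "k < 4" for k
    using vertex_in_tetra_set[OF tet that] img by blast
  define c0 where "c0 i = (if i = 0 then a else if i = 1 then 1 + a else b)" for i :: nat
  define c1 where "c1 i = (if i = 0 then 1 - a else if i = 1 then - a else - b)" for i :: nat
  have "R (p 0) = (\<Sum>i<4. c0 i *\<^sub>R p i)" "R (p 1) = (\<Sum>i<4. c1 i *\<^sub>R p i)"
    unfolding R0 R1 ab c0_def c1_def by (simp_all add: lessThan_4 algebra_simps)
  then have "c0 k \<ge> 0" "c1 k \<ge> 0" if "k < 4" for k
    using tetra_set_coeff_nonneg[OF tet _ that] in_tetra[of 0] in_tetra[of 1] by simp_all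
  from this[of 0] this[of 1] this[of 2] have "a = 0" "b = 0"
    by (simp_all add: c0_def c1_def)
  then show ?thesis using R0 R1 ab by simp
qed

text \<open>Relabelling the vertices as p2, p3, p0, p1 turns the edge p2p3 into the edge p0p1.\<close>

lemma spherical_tetrahedron_relabel:
  fixes p :: "nat \<Rightarrow> real^4"
  assumes tet: "spherical_tetrahedron p"
  shows "spherical_tetrahedron (\<lambda>i. p ([2, 3, 0, 1] ! i))"
proof -
  have "inj_on p {0, 1, 2, 3}" "\<forall>i<4. norm (p i) = 1" "independent (p ` {0, 1, 2, 3})"
    using tet by (simp_all add: spherical_tetrahedron_def lessThan_4)
  then show ?thesis
    by (auto simp: spherical_tetrahedron_def lessThan_4 all_less_4 insert_commute)
qed

lemma tetra_set_relabel:
  fixes p :: "nat \<Rightarrow> real^4"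
  shows "tetra_set (\<lambda>i. p ([2, 3, 0, 1] ! i)) = tetra_set p"
proof -
  have "(\<exists>t. (\<forall>i<4. t i \<ge> 0) \<and> x = (\<Sum>i<4. t i *\<^sub>R p ([2, 3, 0, 1] ! i))) \<longleftrightarrow>
        (\<exists>t. (\<forall>i<4. t i \<ge> 0) \<and> x = (\<Sum>i<4. t i *\<^sub>R p i))" for x
  proof
    assume "\<exists>t. (\<forall>i<4. t i \<ge> 0) \<and> x = (\<Sum>i<4. t i *\<^sub>R p ([2, 3, 0, 1] ! i))"
    then obtain t where "\<forall>i<4. t i \<ge> 0" "x = (\<Sum>i<4. t i *\<^sub>R p ([2, 3, 0, 1] ! i))" by blast
    then show "\<exists>t. (\<forall>i<4. t i \<ge> 0) \<and> x = (\<Sum>i<4. t i *\<^sub>R p i)"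
      by (intro exI[of _ "\<lambda>i. t ([2, 3, 0, 1] ! i)"]) (simp add: lessThan_4 all_less_4 algebra_simps)
  next
    assume "\<exists>t. (\<forall>i<4. t i \<ge> 0) \<and> x = (\<Sum>i<4. t i *\<^sub>R p i)"
    then obtain t where "\<forall>i<4. t i \<ge> 0" "x = (\<Sum>i<4. t i *\<^sub>R p i)" by blast
    then show "\<exists>t. (\<forall>i<4. t i \<ge> 0) \<and> x = (\<Sum>i<4. t i *\<^sub>R p ([2, 3, 0, 1] ! i))"
      by (intro exI[of _ "\<lambda>i. t ([2, 3, 0, 1] ! i)"]) (simp add: lessThan_4 all_less_4 algebra_simps)
  qed
  then show ?thesis by (simp add: tetra_set_def)
qed

lemma Z2_symmetric_obtains_isometry:
  fixes p :: "nat \<Rightarrow> real^4"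
  assumes tet: "spherical_tetrahedron p" and sym: "Z2_symmetric p"
  obtains R where "orthogonal_transformation R"
    "R (p 0) = p 1" "R (p 1) = p 0" "R (p 2) = p 3" "R (p 3) = p 2"
proof -
  obtain R where R: "reflection_through {p 0 + p 1, p 2 + p 3} R" and img: "R ` tetra_set p = tetra_set p"
    using sym unfolding Z2_symmetric_def reflection_through_def by blast
  have R': "reflection_through {p 2 + p 3, p 0 + p 1} R"
    using R by (simp add: insert_commute)
  have "R (p 2) = p 3 \<and> R (p 3) = p 2"
    using half_turn_swaps_first_edge[OF spherical_tetrahedron_relabel[OF tet], of R]
      R' img by (simp add: tetra_set_relabel del: One_nat_def)
  with half_turn_swaps_first_edge[OF tet R img] reflection_through_orthogonal_transformation[OF R]
  show ?thesis using that by blast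
qed

lemma Z2_symmetric_normals_inner:
  fixes p v :: "nat \<Rightarrow> real^4"
  assumes tet: "spherical_tetrahedron p" and normals: "\<And>i. i < 4 \<Longrightarrow> outer_normal p i (v i)"
    and sym: "Z2_symmetric p"
  shows "v 1 \<bullet> v 3 = v 0 \<bullet> v 2" and "v 1 \<bullet> v 2 = v 0 \<bullet> v 3"
proof -
  obtain R where R: "orthogonal_transformation R"
    and Rp: "R (p 0) = p 1" "R (p 1) = p 0" "R (p 2) = p 3" "R (p 3) = p 2"
    using Z2_symmetric_obtains_isometry[OF tet sym] by blast
  define s where "s = Transposition.transpose (0::nat) 1 \<circ> Transposition.transpose 2 3"
  have s: "s permutes {..<4}"
    unfolding s_def by (intro permutes_compose permutes_swap_id) auto
  have s_vals: "s 0 = 1" "s 2 = 3" "s 3 = 2" by (simp_all add: s_def)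
  have "\<forall>j<4. R (p j) = p (s j)"
    using Rp by (simp add: s_def all_less_4)
  then have Rv: "R (v i) = v (s i)" if "i < 4" for i
    using outer_normal_unique[OF tet _ outer_normal_orthogonal_transformation[OF R s _ that normals[OF that]]
        normals[of "s i"]] permutes_in_image[OF s] that by auto
  have inner: "R x \<bullet> R y = x \<bullet> y" for x y
    using R by (simp add: orthogonal_transformation_def)
  show "v 1 \<bullet> v 3 = v 0 \<bullet> v 2" "v 1 \<bullet> v 2 = v 0 \<bullet> v 3"
    using inner[of "v 0" "v 2"] inner[of "v 0" "v 3"] Rv[of 0] Rv[of 2] Rv[of 3] s_vals by simp_all
qed

section \<open>The Gram matrix of a Z2-symmetric tetrahedron\<close>

text \<open>With a, b, c, d = cos A, cos B, cos C, cos D this is the Gram matrix G of the statement.\<close>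

definition Z2_gram :: "real \<Rightarrow> real \<Rightarrow> real \<Rightarrow> real \<Rightarrow> real Matrix.mat" where
  "Z2_gram a b c d = Matrix.mat 4 4 (\<lambda>(i, j).
     [[1, -d, -b, -c], [-d, 1, -c, -b], [-b, -c, 1, -a], [-c, -b, -a, 1]] ! i ! j)"

lemma det_Z2_gram:
  "det (Z2_gram a b c d) = ((1 - a) * (1 - d) - (b + c)^2) * ((1 + a) * (1 + d) - (b - c)^2)"
  by (simp add: Z2_gram_def det_mat_4) (simp add: algebra_simps power2_eq_square)

lemma cofactor_Z2_gram:
  shows "cofactor (Z2_gram a b c d) 0 0 = 1 - a^2 - b^2 - c^2 - 2 * a * b * c"
    and "cofactor (Z2_gram a b c d) 2 2 = 1 - b^2 - c^2 - d^2 - 2 * b * c * d"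
  by (simp_all add: Z2_gram_def cofactor_def mat_delete_mat det_mat_3)
    (simp_all add: algebra_simps power2_eq_square)

lemma cos_dihedral:
  fixes v :: "nat \<Rightarrow> real^4"
  assumes "norm (v i) = 1" "norm (v j) = 1"
  shows "cos (dihedral v i j) = - (v i \<bullet> v j)"
proof -
  have "\<bar>v i \<bullet> v j\<bar> \<le> 1" using Cauchy_Schwarz_ineq2[of "v i" "v j"] assms by simp
  then show ?thesis by (simp add: dihedral_def)
qed

lemma gram_Z2_symmetric:
  fixes p v :: "nat \<Rightarrow> real^4"
  assumes tet: "spherical_tetrahedron p" and normals: "\<And>i. i < 4 \<Longrightarrow> outer_normal p i (v i)"
    and sym: "Z2_symmetric p"
  shows "gram v = Z2_gram (cos (dihedral v 2 3)) (cos (dihedral v 1 3)) (cos (dihedral v 1 2))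
                    (cos (dihedral v 0 1))"
proof -
  have unit: "norm (v i) = 1" if "i < 4" for i using normals[OF that] by (simp add: outer_normal_def)
  then have diag: "v 0 \<bullet> v 0 = 1" "v 1 \<bullet> v 1 = 1" "v 2 \<bullet> v 2 = 1" "v 3 \<bullet> v 3 = 1"
    by (simp_all add: norm_eq_1)
  note mirror = Z2_symmetric_normals_inner[OF tet normals sym]
  have gram: "gram v = Z2_gram (- (v 2 \<bullet> v 3)) (- (v 0 \<bullet> v 2)) (- (v 0 \<bullet> v 3)) (- (v 0 \<bullet> v 1))"
    by (rule eq_matI)
      (auto dest!: less_4_cases simp: gram_def Z2_gram_def diag mirror inner_commute[of "v 1" "v 0"]
        inner_commute[of "v 2" "v 0"] inner_commute[of "v 3" "v 0"] inner_commute[of "v 3" "v 2"]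
        inner_commute[of "v 2" "v 1"] inner_commute[of "v 3" "v 1"] simp del: One_nat_def)
  show ?thesis unfolding gram using mirror by (simp add: cos_dihedral unit del: One_nat_def)
qed

lemma gram_outer_normals_pos:
  fixes p v :: "nat \<Rightarrow> real^4"
  assumes tet: "spherical_tetrahedron p" and normals: "\<And>i. i < 4 \<Longrightarrow> outer_normal p i (v i)"
  shows "det (gram v) > 0" and "i < 4 \<Longrightarrow> cofactor (gram v) i i > 0"
proof -
  have orth: "v j \<bullet> p k = 0" if "j < 4" "k < 4" "j \<noteq> k" for j k
    using normals[OF that(1)] that by (auto simp: outer_normal_def)
  have diag: "v j \<bullet> p j \<noteq> 0" if "j < 4" for j
    using normals[OF that] by (auto simp: outer_normal_def)
  have unit: "norm (p i) = 1" if "i < 4" for i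
    using tet that by (simp add: spherical_tetrahedron_def)
  show "det (gram v) > 0"
    by (rule det_gram_pos_if_pairing_diagonal[where q = p and m = 0]) (use orth diag in auto)
  assume i: "i < 4"
  have "cofactor (gram v) i i = det (gram (v(i := p i)))"
    using orth i unit[OF i] by (intro cofactor_gram_eq_det_gram_update[OF i]) auto
  also have "\<dots> > 0"
    by (rule det_gram_pos_if_pairing_diagonal[where q = p and m = i])
      (use orth diag unit[OF i] in \<open>auto simp: norm_eq_1\<close>)
  finally show "cofactor (gram v) i i > 0" .
qed

section \<open>The quadratic equation\<close>

lemma cos_half_sum_half_diff:
  fixes A D :: real
  shows "cos ((A + D) / 2) * cos ((D - A) / 2) = (cos A + cos D) / 2"
    and "cos ((A + D) / 2)^2 + cos ((D - A) / 2)^2 = 1 + cos A * cos D"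
proof -
  have half: "(A + D) / 2 - (D - A) / 2 = A" "(A + D) / 2 + (D - A) / 2 = D"
    by (simp_all add: field_simps)
  show "cos ((A + D) / 2) * cos ((D - A) / 2) = (cos A + cos D) / 2"
    using cos_times_cos[of "(A + D) / 2" "(D - A) / 2"] unfolding half .
  have double: "2 * ((A + D) / 2) = A + D" "2 * ((D - A) / 2) = D - A" by simp_all
  have "cos (A + D) = 2 * cos ((A + D) / 2)^2 - 1" "cos (D - A) = 2 * cos ((D - A) / 2)^2 - 1"
    using cos_double_cos[of "(A + D) / 2"] cos_double_cos[of "(D - A) / 2"] unfolding double
    by simp_all
  moreover have "cos (A + D) + cos (D - A) = 2 * cos A * cos D" by (simp add: cos_add cos_diff)
  ultimately show "cos ((A + D) / 2)^2 + cos ((D - A) / 2)^2 = 1 + cos A * cos D" by simp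
qed

lemma Z2_gram_identities:
  fixes Ap Am a b c d :: real
  assumes prod: "Ap * Am = (a + d) / 2" and sq: "Ap^2 + Am^2 = 1 + a * d"
  shows "(Am - Ap - b - c) * (Am - Ap + b + c) * (Am + Ap - b + c) * (Am + Ap + b - c)
           = ((1 - a) * (1 - d) - (b + c)^2) * ((1 + a) * (1 + d) - (b - c)^2)"
    and "(1 - a^2 - b^2 - c^2 - 2 * a * b * c) * (1 - b^2 - c^2 - d^2 - 2 * b * c * d)
           = ((1 - a) * (1 - d) - (b + c)^2) * ((1 + a) * (1 + d) - (b - c)^2)
             + 4 * ((Ap * Am + b * c) * (Ap * b + Am * c) * (Ap * c + Am * b))"
proof -
  have "(Am - Ap - b - c) * (Am - Ap + b + c) * (Am + Ap - b + c) * (Am + Ap + b - c) =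
      ((Ap^2 + Am^2) - 2 * (Ap * Am) - (b + c)^2) * ((Ap^2 + Am^2) + 2 * (Ap * Am) - (b - c)^2)"
    by (simp add: algebra_simps power2_eq_square)
  then show "(Am - Ap - b - c) * (Am - Ap + b + c) * (Am + Ap - b + c) * (Am + Ap + b - c)
           = ((1 - a) * (1 - d) - (b + c)^2) * ((1 + a) * (1 + d) - (b - c)^2)"
    unfolding prod sq by (simp add: field_simps power2_eq_square)
  have "(Ap * Am + b * c) * (Ap * b + Am * c) * (Ap * c + Am * b) =
      (Ap * Am + b * c) * ((Ap * Am) * (b^2 + c^2) + b * c * (Ap^2 + Am^2))"
    by (simp add: algebra_simps power2_eq_square)
  then show "(1 - a^2 - b^2 - c^2 - 2 * a * b * c) * (1 - b^2 - c^2 - d^2 - 2 * b * c * d)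
           = ((1 - a) * (1 - d) - (b + c)^2) * ((1 + a) * (1 + d) - (b - c)^2)
             + 4 * ((Ap * Am + b * c) * (Ap * b + Am * c) * (Ap * c + Am * b))"
    unfolding prod sq by (simp add: field_simps power2_eq_square)
qed

theorem lemma3:
  fixes p v :: "nat \<Rightarrow> real^4"
  assumes tet: "spherical_tetrahedron p"
    and normals: "\<And>i. i < 4 \<Longrightarrow> outer_normal p i (v i)"
    and sym: "Z2_symmetric p"
  defines "A \<equiv> dihedral v 2 3" and "B \<equiv> dihedral v 1 3" and "C \<equiv> dihedral v 1 2"
    and "D \<equiv> dihedral v 0 1"
  defines "Ap \<equiv> cos ((A + D) / 2)" and "Am \<equiv> cos ((D - A) / 2)"
    and "cB \<equiv> cos B" and "cC \<equiv> cos C"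
  defines "\<Delta> \<equiv> (Am - Ap - cB - cC) * (Am - Ap + cB + cC) * (Am + Ap - cB + cC) * (Am + Ap + cB - cC)"
  defines "dual \<equiv> sqrt (cofactor (gram v) 0 0 * cofactor (gram v) 2 2 / det (gram v))"
  shows "dual > 0 \<and>
         dual\<^sup>2 - 4 * (Ap * Am + cB * cC) * (Ap * cB + Am * cC) * (Ap * cC + Am * cB) / \<Delta> = 1"
proof -
  let ?N = "(Ap * Am + cB * cC) * (Ap * cB + Am * cC) * (Ap * cC + Am * cB)"
  have G: "gram v = Z2_gram (cos A) cB cC (cos D)"
    unfolding A_def cB_def B_def cC_def C_def D_def by (rule gram_Z2_symmetric[OF tet normals sym])
  note identities = Z2_gram_identities[OF cos_half_sum_half_diff[of A D, folded Ap_def Am_def]]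
  have det: "det (gram v) = \<Delta>"
    unfolding G det_Z2_gram \<Delta>_def identities(1) ..
  have cofactors: "cofactor (gram v) 0 0 * cofactor (gram v) 2 2 = \<Delta> + 4 * ?N"
    unfolding G cofactor_Z2_gram identities(2) det_Z2_gram[symmetric] det[unfolded G] ..
  have pos: "\<Delta> > 0" "cofactor (gram v) 0 0 * cofactor (gram v) 2 2 > 0"
    using gram_outer_normals_pos[OF tet normals] det by simp_all
  then have "dual\<^sup>2 = (\<Delta> + 4 * ?N) / \<Delta>" unfolding dual_def cofactors[symmetric] det by simp
  then show ?thesis using pos by (simp add: dual_def det field_simps)
qed

end
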